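(* Let $X$ be a nonempty finite $T_0$-space and $I$ the identity matrix of order $|X|$. Then (1) $X$ is a totally ordered set if and only if $\det(X_M+I)=1$; and (2) $\det(X_M+I)=0$ if and only if $X$ is not a totally ordered set.
   Context: A finite $T_0$-space is identified with a finite poset via $x\le y$ iff $U_x\subseteq U_y$, where $U_x$ is the minimal open set containing $x$. For a labelling $X=\{x_1,\dots,x_n\}$, $X_M=(x_{i,j})$ is the $n\times n$ matrix with $x_{i,j}=0$ if $x_i\le x_j$ and $x_{i,j}=1$ otherwise. *)

theory Defs
  imports "HOL-Analysis.Abstract_Topological_Spaces" "Jordan_Normal_Form.Determinant"
begin

definition minimal_open :: "'a topology \<Rightarrow> 'a \<Rightarrow> 'a set" where
  "minimal_open T x = \<Inter>{U. openin T U \<and> x \<in> U}"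

text \<open>Specialization order of a finite T0 space: x \<le> y iff U_x \<subseteq> U_y.\<close>
definition top_le :: "'a topology \<Rightarrow> 'a \<Rightarrow> 'a \<Rightarrow> bool" where
  "top_le T x y \<longleftrightarrow> minimal_open T x \<subseteq> minimal_open T y"

definition totally_ordered_space :: "'a topology \<Rightarrow> bool" where
  "totally_ordered_space T \<longleftrightarrow>
     (\<forall>x\<in>topspace T. \<forall>y\<in>topspace T. top_le T x y \<or> top_le T y x)"

text \<open>X_M for the labelling x_i = lab i, i < n: entry 0 if x_i \<le> x_j, else 1.\<close>
definition space_matrix :: "'a topology \<Rightarrow> nat \<Rightarrow> (nat \<Rightarrow> 'a) \<Rightarrow> int mat" where
  "space_matrix T n lab = mat n n (\<lambda>(i,j). if top_le T (lab i) (lab j) then 0 else 1)"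

end

theory Submission
  imports Defs
begin

text \<open>Write \<open>\<le>\<close> for the specialization order. If \<open>X\<close> is a chain, every permutation
  \<open>p \<noteq> id\<close> moves some \<open>x\<close> upwards, \<open>x < p x\<close>, so its term in the Leibniz expansion of
  \<open>det (X\<^sub>M + I)\<close> contains a zero entry; only the identity survives and the determinant is 1.
  If \<open>X\<close> is not a chain, choose \<open>x\<close> maximal among the elements having an incomparable
  partner and \<open>y\<close> maximal among the partners of \<open>x\<close>. Then \<open>x\<close> and \<open>y\<close> have the same strict
  upper bounds, so rows \<open>x\<close> and \<open>y\<close> of \<open>X\<^sub>M + I\<close> coincide and the determinant is 0.\<close>

lemma finite_preorder_has_maximal:
  assumes "finite B" "B \<noteq> {}" "reflp_on B Q" "transp_on B Q"
  shows "\<exists>x\<in>B. \<forall>z\<in>B. Q x z \<longrightarrow> Q z x"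
proof -
  define up where "up x = card {w\<in>B. Q x w}" for x
  obtain x where "x \<in> B" and x_min: "\<And>z. z \<in> B \<Longrightarrow> up x \<le> up z"
    using assms(2) ex_has_least_nat[of "\<lambda>x. x \<in> B" _ up] by blast
  have "Q z x" if "z \<in> B" "Q x z" for z
  proof (rule ccontr)
    assume "\<not> Q z x"
    then have "{w\<in>B. Q z w} \<subset> {w\<in>B. Q x w}"
      using \<open>x \<in> B\<close> that reflp_onD[OF assms(3)] transp_onD[OF assms(4), of x z] by auto
    then have "up z < up x"
      unfolding up_def using assms(1) by (intro psubset_card_mono) auto
    with x_min[OF \<open>z \<in> B\<close>] show False by simp
  qed
  with \<open>x \<in> B\<close> show ?thesis by blast
qed

lemma permutation_moves_up_in_total_preorder:
  assumes "finite A" "p permutes A" "p \<noteq> id"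
    and "reflp_on A Q" "transp_on A Q" "totalp_on A Q"
  shows "\<exists>i\<in>A. p i \<noteq> i \<and> Q i (p i)"
proof -
  define B where "B = {i\<in>A. p i \<noteq> i}"
  have "B \<subseteq> A"
    unfolding B_def by blast
  then have "finite B" "reflp_on B Q\<inverse>\<inverse>" "transp_on B Q\<inverse>\<inverse>"
    using finite_subset assms(1,4,5) reflp_on_subset transp_on_subset by auto
  moreover have "B \<noteq> {}"
    using assms(2,3) unfolding B_def permutes_def by (auto simp: fun_eq_iff)
  ultimately obtain i where "i \<in> B" and i_min: "\<And>z. z \<in> B \<Longrightarrow> Q z i \<Longrightarrow> Q i z"
    using finite_preorder_has_maximal[of B "Q\<inverse>\<inverse>"] by auto
  have "i \<in> A" "p i \<noteq> i"
    using \<open>i \<in> B\<close> unfolding B_def by auto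
  have "p i \<in> B"
    using \<open>p i \<noteq> i\<close> permutes_in_image[OF assms(2)] permutes_inj[OF assms(2)] \<open>i \<in> A\<close>
    unfolding B_def by (auto dest: injD)
  have "Q i (p i) \<or> Q (p i) i"
    using totalp_onD[OF assms(6)] \<open>i \<in> A\<close> \<open>p i \<in> B\<close> \<open>p i \<noteq> i\<close> unfolding B_def by auto
  then have "Q i (p i)"
    using i_min[OF \<open>p i \<in> B\<close>] by blast
  with \<open>i \<in> A\<close> \<open>p i \<noteq> i\<close> show ?thesis by blast
qed

lemma finite_poset_incomparable_twins:
  assumes "finite A" "reflp_on A Q" "transp_on A Q" "antisymp_on A Q"
    and "a \<in> A" "b \<in> A" "\<not> Q a b" "\<not> Q b a"
  obtains x y where "x \<in> A" "y \<in> A" "x \<noteq> y" "\<not> Q x y" "\<not> Q y x"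
    and "\<And>z. z \<in> A \<Longrightarrow> z \<noteq> x \<Longrightarrow> z \<noteq> y \<Longrightarrow> Q x z \<longleftrightarrow> Q y z"
proof -
  define S where "S = {x\<in>A. \<exists>y\<in>A. \<not> Q x y \<and> \<not> Q y x}"
  have "S \<subseteq> A" "S \<noteq> {}"
    using assms(5-8) unfolding S_def by blast+
  then obtain x where "x \<in> S" and x_max: "\<And>z. z \<in> S \<Longrightarrow> Q x z \<Longrightarrow> Q z x"
    using finite_preorder_has_maximal[of S Q] finite_subset[OF _ assms(1)]
      reflp_on_subset[OF assms(2)] transp_on_subset[OF assms(3)]
    by blast
  define Y where "Y = {y\<in>A. \<not> Q x y \<and> \<not> Q y x}"
  have "Y \<subseteq> A" "Y \<noteq> {}"
    using \<open>x \<in> S\<close> unfolding S_def Y_def by blast+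
  then obtain y where "y \<in> Y" and y_max: "\<And>z. z \<in> Y \<Longrightarrow> Q y z \<Longrightarrow> Q z y"
    using finite_preorder_has_maximal[of Y Q] finite_subset[OF _ assms(1)]
      reflp_on_subset[OF assms(2)] transp_on_subset[OF assms(3)]
    by blast
  have "x \<in> A" "y \<in> A" "\<not> Q x y" "\<not> Q y x"
    using \<open>x \<in> S\<close> \<open>y \<in> Y\<close> unfolding S_def Y_def by auto
  have "x \<noteq> y"
    using \<open>x \<in> A\<close> \<open>\<not> Q x y\<close> reflp_onD[OF assms(2)] by blast
  have Q_antisym: "\<And>u v. u \<in> A \<Longrightarrow> v \<in> A \<Longrightarrow> Q u v \<Longrightarrow> Q v u \<Longrightarrow> u = v"
    using antisymp_onD[OF assms(4)] by blast
  have Q_trans: "\<And>u v w. u \<in> A \<Longrightarrow> v \<in> A \<Longrightarrow> w \<in> A \<Longrightarrow> Q u v \<Longrightarrow> Q v w \<Longrightarrow> Q u w"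
    using transp_onD[OF assms(3)] by blast
  have "Q x z \<longleftrightarrow> Q y z" if "z \<in> A" "z \<noteq> x" "z \<noteq> y" for z
  proof
    assume "Q x z"
    then have "z \<notin> S"
      using x_max Q_antisym \<open>x \<in> A\<close> that by blast
    then show "Q y z"
      using that \<open>y \<in> A\<close> \<open>\<not> Q x y\<close> Q_trans[OF \<open>x \<in> A\<close> \<open>z \<in> A\<close> \<open>y \<in> A\<close> \<open>Q x z\<close>]
      unfolding S_def by blast
  next
    assume "Q y z"
    then have "z \<notin> Y"
      using y_max Q_antisym \<open>y \<in> A\<close> that by blast
    then show "Q x z"
      using that \<open>\<not> Q y x\<close> Q_trans[OF \<open>y \<in> A\<close> \<open>z \<in> A\<close> \<open>x \<in> A\<close> \<open>Q y z\<close>]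
      unfolding Y_def by blast
  qed
  with that \<open>x \<in> A\<close> \<open>y \<in> A\<close> \<open>x \<noteq> y\<close> \<open>\<not> Q x y\<close> \<open>\<not> Q y x\<close> show thesis by blast
qed

definition relation_matrix :: "nat \<Rightarrow> (nat \<Rightarrow> nat \<Rightarrow> bool) \<Rightarrow> int mat" where
  "relation_matrix n Q = mat n n (\<lambda>(i, j). if Q i j then 0 else 1)"

lemma index_relation_matrix [simp]:
  "i < n \<Longrightarrow> j < n \<Longrightarrow> relation_matrix n Q $$ (i, j) = (if Q i j then 0 else 1)"
  and dim_row_relation_matrix [simp]: "dim_row (relation_matrix n Q) = n"
  and dim_col_relation_matrix [simp]: "dim_col (relation_matrix n Q) = n"
  and relation_matrix_carrier_mat [simp]: "relation_matrix n Q \<in> carrier_mat n n"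
  unfolding relation_matrix_def by simp_all

lemma det_relation_matrix_plus_one_total:
  assumes "reflp_on {..<n} Q" "transp_on {..<n} Q" "totalp_on {..<n} Q"
  shows "det (relation_matrix n Q + 1\<^sub>m n) = 1"
proof -
  let ?A = "relation_matrix n Q + 1\<^sub>m n"
  have Q_refl: "\<And>i. i < n \<Longrightarrow> Q i i"
    using reflp_onD[OF assms(1)] by simp
  have leibniz_term: "signof p * (\<Prod>i = 0..<n. ?A $$ (i, p i)) = (if p = id then 1 else 0)"
    if p: "p permutes {0..<n}" for p
  proof (cases "p = id")
    case True
    have "(\<Prod>i = 0..<n. ?A $$ (i, p i)) = 1"
      using True Q_refl by (intro prod.neutral) simp
    with True show ?thesis by simp
  next
    case False
    then obtain i where "i < n" "p i \<noteq> i" "Q i (p i)"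
      using permutation_moves_up_in_total_preorder[of "{..<n}" p Q] p assms
      by (auto simp: atLeast0LessThan)
    moreover have "p i < n"
      using permutes_in_image[OF p] \<open>i < n\<close> by simp
    ultimately have "?A $$ (i, p i) = 0"
      by simp
    with \<open>i < n\<close> have "(\<Prod>i = 0..<n. ?A $$ (i, p i)) = 0"
      by (intro prod_zero bexI[of _ i]) simp_all
    with False show ?thesis by simp
  qed
  have "det ?A = (\<Sum>p\<in>{p. p permutes {0..<n}}. signof p * (\<Prod>i = 0..<n. ?A $$ (i, p i)))"
    by (rule det_def') simp
  also have "\<dots> = (\<Sum>p\<in>{p. p permutes {0..<n}}. if p = id then 1 else 0)"
    by (rule sum.cong[OF refl], rule leibniz_term) simp
  also have "\<dots> = 1"
    using permutes_id[of "{0..<n}"]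
    by (subst sum.delta) (simp_all add: finite_permutations[OF finite_atLeastLessThan])
  finally show ?thesis .
qed

lemma det_relation_matrix_plus_one_incomparable:
  assumes "reflp_on {..<n} Q" "transp_on {..<n} Q" "antisymp_on {..<n} Q"
    and "a < n" "b < n" "\<not> Q a b" "\<not> Q b a"
  shows "det (relation_matrix n Q + 1\<^sub>m n) = 0"
proof -
  let ?A = "relation_matrix n Q + 1\<^sub>m n"
  have Q_refl: "\<And>i. i < n \<Longrightarrow> Q i i"
    using reflp_onD[OF assms(1)] by simp
  obtain x y where "x < n" "y < n" "x \<noteq> y" "\<not> Q x y" "\<not> Q y x"
    and twins: "\<And>z. z < n \<Longrightarrow> z \<noteq> x \<Longrightarrow> z \<noteq> y \<Longrightarrow> Q x z \<longleftrightarrow> Q y z"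
    using finite_poset_incomparable_twins[of "{..<n}" Q a b] assms by auto
  have rows: "row ?A x = row ?A y"
  proof (rule eq_vecI)
    fix z
    assume "z < dim_vec (row ?A y)"
    then have "z < n"
      by simp
    then show "vec_index (row ?A x) z = vec_index (row ?A y) z"
      using Q_refl \<open>x < n\<close> \<open>y < n\<close>
        \<open>\<not> Q x y\<close> \<open>\<not> Q y x\<close> twins[of z]
      by (cases "z = x \<or> z = y") auto
  qed simp
  show ?thesis
    by (rule det_identical_rows[OF _ \<open>x \<noteq> y\<close> \<open>x < n\<close> \<open>y < n\<close> rows]) simp
qed

lemma minimal_open_subset:
  assumes "openin T U" "x \<in> U"
  shows "minimal_open T x \<subseteq> U"
  using assms unfolding minimal_open_def by auto

lemma mem_minimal_open:
  assumes "x \<in> topspace T"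
  shows "x \<in> minimal_open T x"
  using assms unfolding minimal_open_def by auto

lemma reflp_on_top_le: "reflp_on S (top_le T)"
  and transp_on_top_le: "transp_on S (top_le T)"
  unfolding top_le_def reflp_on_def transp_on_def by auto

lemma antisymp_on_top_le:
  assumes "t0_space T"
  shows "antisymp_on (topspace T) (top_le T)"
proof (rule antisymp_onI)
  fix x y
  assume x: "x \<in> topspace T" and y: "y \<in> topspace T"
    and xy: "top_le T x y" and yx: "top_le T y x"
  have same: "minimal_open T x = minimal_open T y"
    using xy yx unfolding top_le_def by (rule subset_antisym)
  show "x = y"
  proof (rule ccontr)
    assume "x \<noteq> y"
    then obtain U where U: "openin T U" "x \<notin> U \<longleftrightarrow> y \<in> U"
      using assms x y unfolding t0_space_def by blast
    show False
    proof (cases "y \<in> U")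
      case True
      then have "x \<in> U"
        using minimal_open_subset[OF U(1) True] mem_minimal_open[OF x] same by blast
      with U True show False by blast
    next
      case False
      with U have "x \<in> U" by blast
      then have "y \<in> U"
        using minimal_open_subset[OF U(1)] mem_minimal_open[OF y] same by blast
      with False show False ..
    qed
  qed
qed

lemma totally_ordered_space_iff_totalp_on:
  "totally_ordered_space T \<longleftrightarrow> totalp_on (topspace T) (top_le T)"
proof -
  have "top_le T x x" for x
    unfolding top_le_def ..
  then show ?thesis
    unfolding totally_ordered_space_def totalp_on_def by metis
qed

lemma space_matrix_eq_relation_matrix:
  "space_matrix T n lab = relation_matrix n (\<lambda>i j. top_le T (lab i) (lab j))"
  unfolding space_matrix_def relation_matrix_def ..

theorem mainTheorem16:
  fixes T :: "'a topology" and n :: nat and lab :: "nat \<Rightarrow> 'a"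
  assumes "finite (topspace T)"
    and "topspace T \<noteq> {}"
    and "t0_space T"
    and "n = card (topspace T)"
    and "bij_betw lab {..<n} (topspace T)"
  shows "(totally_ordered_space T \<longleftrightarrow> det (space_matrix T n lab + 1\<^sub>m n) = 1)
       \<and> (det (space_matrix T n lab + 1\<^sub>m n) = 0 \<longleftrightarrow> \<not> totally_ordered_space T)"
proof -
  \<comment> \<open>Finiteness and \<open>n = card (topspace T)\<close> are implied by the bijection, which is all we use.\<close>
  let ?Q = "\<lambda>i j. top_le T (lab i) (lab j)"
  have space: "topspace T = lab ` {..<n}" and inj: "inj_on lab {..<n}"
    using assms(5) by (auto simp: bij_betw_def)
  have Q_refl: "reflp_on {..<n} ?Q"
    using reflp_on_top_le[of "topspace T" T] unfolding space reflp_on_image .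
  have Q_trans: "transp_on {..<n} ?Q"
    using transp_on_top_le[of "topspace T" T] unfolding space transp_on_image .
  have Q_antisym: "antisymp_on {..<n} ?Q"
    using antisymp_on_top_le[OF assms(3)] unfolding space antisymp_on_image[OF inj] .
  have total_iff: "totally_ordered_space T \<longleftrightarrow> totalp_on {..<n} ?Q"
    unfolding totally_ordered_space_iff_totalp_on space totalp_on_image[OF inj] ..
  have "det (space_matrix T n lab + 1\<^sub>m n) = (if totally_ordered_space T then 1 else 0)"
  proof (cases "totally_ordered_space T")
    case True
    then show ?thesis
      using det_relation_matrix_plus_one_total[OF Q_refl Q_trans] total_iff
      by (simp add: space_matrix_eq_relation_matrix)
  next
    case False
    with total_iff obtain a b where "a < n" "b < n" "\<not> ?Q a b" "\<not> ?Q b a"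
      unfolding totalp_on_def by auto
    with False show ?thesis
      using det_relation_matrix_plus_one_incomparable[OF Q_refl Q_trans Q_antisym]
      by (simp add: space_matrix_eq_relation_matrix)
  qed
  then show ?thesis
    by simp
qed

end
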